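(* Let $0<r<q-1$, $n\ge1$, $0\le k,s\le q-1$, and let $\begin{pmatrix}a&b\\c&d\end{pmatrix}\in I$. If $s_n^k$ and $t_n^s$ are $I(1)$-invariant modulo $(\mathrm{Ker}\,T_{-1,0},\mathrm{Ker}\,T_{1,2})$, then they are $I$-eigenvectors, with (1) $\begin{pmatrix}a&b\\c&d\end{pmatrix}\cdot s_n^k=\bar d^{\,r}(\bar d\bar a^{-1})^ks_n^k$, (2) $\begin{pmatrix}a&b\\c&d\end{pmatrix}\cdot t_n^s=\bar a^{\,r}(\bar d\bar a^{-1})^st_n^s$.
   Context: $F$ is a finite extension of $\mathbb Q_p$ with ring of integers $\mathcal O$, uniformizer $\varpi$, residue field $\mathbb F_q$; $[x]$ is the multiplicative representative of $x\in\mathbb F_q$, $\bar a\in\mathbb F_q\subset\overline{\mathbb F}_p$ the reduction of $a\in\mathcal O$; convention $0^0=1$. $G=\mathrm{GL}_2(F)$, $K=\mathrm{GL}_2(\mathcal O)$, $Z$ the centre, $I$ the Iwahori subgroup of $K$ (lower-left entry in $\varpi\mathcal O$), $I(1)$ the pro-$p$ Iwahori (elements of $I$ with diagonal entries $\equiv1\bmod\varpi$). $\chi_r:IZ\to\overline{\mathbb F}_p^\times$, $\begin{pmatrix} a&b\\ \varpi c&d\end{pmatrix}\mapsto\bar d^{\,r}$, $\mathrm{diag}(\varpi,\varpi)\mapsto1$; in the compact induction $\mathrm{ind}_{IZ}^G\chi_r$, $[g,1]$ is the element supported on $IZg^{-1}$ with value $1$ at $g^{-1}$, so $h[g,1]=[hg,1]$.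 $\beta=\begin{pmatrix}0&1\\ \varpi&0\end{pmatrix}$, $w=\begin{pmatrix}0&1\\1&0\end{pmatrix}$. $T_{-1,0},T_{1,2}$ are the $G$-endomorphisms with $T_{-1,0}[g,1]=\sum_{\lambda\in I_1}[g\begin{pmatrix}\varpi&\lambda\\0&1\end{pmatrix},1]$, $T_{1,2}[g,1]=\sum_{\lambda\in I_1}[g\beta\begin{pmatrix}1&\lambda\\0&1\end{pmatrix}w,1]$; $(\mathrm{Ker}\,T_{-1,0},\mathrm{Ker}\,T_{1,2})$ denotes $\mathrm{Ker}\,T_{-1,0}+\mathrm{Ker}\,T_{1,2}$. $I_n=\{\sum_{i=0}^{n-1}[\mu_i]\varpi^i:\mu_i\in\mathbb F_q\}$, digits $\mu_i$, truncation $[\mu]_m=\sum_{i<m}[\mu_i]\varpi^i$. $s_n^k=\sum_{\mu\in I_n}\mu_{n-1}^k[\begin{pmatrix}\varpi^n&\mu\\0&1\end{pmatrix},1]$ and $t_n^s=\sum_{\mu\in I_n}\mu_{n-1}^s[\begin{pmatrix}\varpi^{n-1}&[\mu]_{n-1}\\0&1\end{pmatrix}\begin{pmatrix}1&[\mu_{n-1}]\\0&1\end{pmatrix}w,1]$. *)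

theory Defs
  imports "HOL-Computational_Algebra.Polynomial" "HOL-Library.FuncSet"
begin

datatype 'a m2 = M2 (m11: 'a) (m12: 'a) (m21: 'a) (m22: 'a)

definition mmul :: "'a::comm_ring_1 m2 \<Rightarrow> 'a m2 \<Rightarrow> 'a m2" where
  "mmul A B = M2 (m11 A * m11 B + m12 A * m21 B) (m11 A * m12 B + m12 A * m22 B)
                 (m21 A * m11 B + m22 A * m21 B) (m21 A * m12 B + m22 A * m22 B)"

definition mdet :: "'a::comm_ring_1 m2 \<Rightarrow> 'a" where
  "mdet A = m11 A * m22 A - m12 A * m21 A"

definition minv :: "'a::field m2 \<Rightarrow> 'a m2" where
  "minv A = M2 (m22 A / mdet A) (- m12 A / mdet A) (- m21 A / mdet A) (m11 A / mdet A)"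

text \<open>v is the normalised discrete valuation on F (its value at 0 is irrelevant);
  vge v x N means "x = 0 or v x >= N".\<close>

definition vge :: "('f::field \<Rightarrow> int) \<Rightarrow> 'f \<Rightarrow> int \<Rightarrow> bool" where
  "vge v x N \<longleftrightarrow> x = 0 \<or> N \<le> v x"

definition Oset :: "('f::field \<Rightarrow> int) \<Rightarrow> 'f set" where
  "Oset v = {x. vge v x 0}"

text \<open>The standing setting: F (type 'f, characteristic 0) is complete for the discrete
  valuation v with uniformizer u, and the reduction map red : O \<rightarrow> 'k is a ring
  homomorphism with kernel u O and finite image F_q; 'k is an algebraic closure of F_p
  (algebraically closed, characteristic p, algebraic over the prime field).
  A complete discretely valued field of characteristic 0 with finite residue field of
  characteristic p is exactly a finite extension of Q_p.\<close>

definition padic_setting :: "('f::field_char_0 \<Rightarrow> int) \<Rightarrow> 'f \<Rightarrow> nat \<Rightarrow> ('f \<Rightarrow> 'k::field) \<Rightarrow> bool" where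
  "padic_setting v u p red \<longleftrightarrow>
     (\<forall>x y. x \<noteq> 0 \<longrightarrow> y \<noteq> 0 \<longrightarrow> v (x * y) = v x + v y) \<and>
     (\<forall>x y. x \<noteq> 0 \<longrightarrow> y \<noteq> 0 \<longrightarrow> x + y \<noteq> 0 \<longrightarrow> min (v x) (v y) \<le> v (x + y)) \<and>
     u \<noteq> 0 \<and> v u = 1 \<and>
     (\<forall>a :: nat \<Rightarrow> 'f. (\<forall>N. \<exists>M. \<forall>m\<ge>M. \<forall>m'\<ge>M. vge v (a m - a m') N) \<longrightarrow>
          (\<exists>L. \<forall>N. \<exists>M. \<forall>m\<ge>M. vge v (a m - L) N)) \<and>
     prime p \<and> of_nat p = (0::'k) \<and>
     (\<forall>x\<in>Oset v. \<forall>y\<in>Oset v. red (x + y) = red x + red y \<and> red (x * y) = red x * red y) \<and>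
     red 1 = 1 \<and>
     (\<forall>x\<in>Oset v. red x = 0 \<longleftrightarrow> vge v x 1) \<and>
     finite (red ` Oset v) \<and>
     (\<forall>P :: 'k poly. 0 < degree P \<longrightarrow> (\<exists>z. poly P z = 0)) \<and>
     (\<forall>z :: 'k. \<exists>P :: 'k poly. P \<noteq> 0 \<and> (\<forall>i. coeff P i \<in> range of_nat) \<and> poly P z = 0)"

definition Fq :: "('f::field \<Rightarrow> int) \<Rightarrow> ('f \<Rightarrow> 'k) \<Rightarrow> 'k set" where
  "Fq v red = red ` Oset v"

definition teich :: "('f::field \<Rightarrow> int) \<Rightarrow> ('f \<Rightarrow> 'k) \<Rightarrow> 'k \<Rightarrow> 'f" where
  "teich v red x = (THE t. t \<in> Oset v \<and> red t = x \<and> t ^ card (Fq v red) = t)"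

definition Iw :: "('f::field \<Rightarrow> int) \<Rightarrow> 'f m2 set" where
  "Iw v = {g. m11 g \<in> Oset v \<and> m12 g \<in> Oset v \<and> m22 g \<in> Oset v \<and> vge v (m21 g) 1
              \<and> mdet g \<noteq> 0 \<and> v (mdet g) = 0}"

definition I1 :: "('f::field \<Rightarrow> int) \<Rightarrow> ('f \<Rightarrow> 'k::field) \<Rightarrow> 'f m2 set" where
  "I1 v red = {g \<in> Iw v. red (m11 g) = 1 \<and> red (m22 g) = 1}"

definition IZ :: "('f::field \<Rightarrow> int) \<Rightarrow> 'f m2 set" where
  "IZ v = {mmul (M2 z 0 0 z) h | z h. z \<noteq> 0 \<and> h \<in> Iw v}"

text \<open>chi_r on IZ: write g = u^m z h with z a unit scalar, h in I; m = v(det g)/2.\<close>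
definition chi :: "('f::field \<Rightarrow> int) \<Rightarrow> 'f \<Rightarrow> ('f \<Rightarrow> 'k::field) \<Rightarrow> nat \<Rightarrow> 'f m2 \<Rightarrow> 'k" where
  "chi v u red r g = red (m22 g * u powi (- (v (mdet g) div 2))) ^ r"

text \<open>Elements are functions f : GL2(F) \<rightarrow> 'k (zero off GL2(F)) with f(hx) = chi(h) f(x)
  for h in IZ, supported on finitely many cosets IZ x; G acts by (h.f)(x) = f(xh).\<close>
definition ind_space :: "('f::field \<Rightarrow> int) \<Rightarrow> 'f \<Rightarrow> ('f \<Rightarrow> 'k::field) \<Rightarrow> nat \<Rightarrow> ('f m2 \<Rightarrow> 'k) set" where
  "ind_space v u red r = {f.
     (\<forall>x. mdet x = 0 \<longrightarrow> f x = 0) \<and>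
     (\<forall>h\<in>IZ v. \<forall>x. mdet x \<noteq> 0 \<longrightarrow> f (mmul h x) = chi v u red r h * f x) \<and>
     (\<exists>S. finite S \<and> (\<forall>x. f x \<noteq> 0 \<longrightarrow> (\<exists>s\<in>S. \<exists>h\<in>IZ v. x = mmul h s)))}"

definition act :: "'f::field m2 \<Rightarrow> ('f m2 \<Rightarrow> 'k) \<Rightarrow> ('f m2 \<Rightarrow> 'k)" where
  "act h f = (\<lambda>x. f (mmul x h))"

text \<open>[g,1]: supported on IZ g^{-1}, value 1 at g^{-1}.\<close>
definition bracket :: "('f::field \<Rightarrow> int) \<Rightarrow> 'f \<Rightarrow> ('f \<Rightarrow> 'k::field) \<Rightarrow> nat \<Rightarrow> 'f m2 \<Rightarrow> ('f m2 \<Rightarrow> 'k)" where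
  "bracket v u red r g = (\<lambda>x. if mdet x \<noteq> 0 \<and> mmul x g \<in> IZ v then chi v u red r (mmul x g) else 0)"

text \<open>Cosets IZ x meeting the support of f, a chosen representative of each, and the linear
  extension of an operator given on the elements [g,1] (using f = sum_C f(c_C) [c_C^{-1},1]).\<close>
definition cosets_of :: "('f::field \<Rightarrow> int) \<Rightarrow> ('f m2 \<Rightarrow> 'k::zero) \<Rightarrow> 'f m2 set set" where
  "cosets_of v f = {C. \<exists>x. f x \<noteq> 0 \<and> C = {mmul h x | h. h \<in> IZ v}}"

definition rep :: "'a set \<Rightarrow> 'a" where
  "rep C = (SOME c. c \<in> C)"

definition lin_ext :: "('f::field \<Rightarrow> int) \<Rightarrow> ('f m2 \<Rightarrow> ('f m2 \<Rightarrow> 'k::field)) \<Rightarrow> ('f m2 \<Rightarrow> 'k) \<Rightarrow> ('f m2 \<Rightarrow> 'k)" where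
  "lin_ext v B f = (\<lambda>x. \<Sum>C\<in>cosets_of v f. f (rep C) * B (minv (rep C)) x)"

definition beta :: "'f \<Rightarrow> 'f::field m2" where
  "beta u = M2 0 1 u 0"

definition wmat :: "'f::field m2" where
  "wmat = M2 0 1 1 0"

definition Tm10_basis :: "('f::field \<Rightarrow> int) \<Rightarrow> 'f \<Rightarrow> ('f \<Rightarrow> 'k::field) \<Rightarrow> nat \<Rightarrow> 'f m2 \<Rightarrow> ('f m2 \<Rightarrow> 'k)" where
  "Tm10_basis v u red r g = (\<lambda>x. \<Sum>l\<in>Fq v red. bracket v u red r (mmul g (M2 u (teich v red l) 0 1)) x)"

definition T12_basis :: "('f::field \<Rightarrow> int) \<Rightarrow> 'f \<Rightarrow> ('f \<Rightarrow> 'k::field) \<Rightarrow> nat \<Rightarrow> 'f m2 \<Rightarrow> ('f m2 \<Rightarrow> 'k)" where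
  "T12_basis v u red r g = (\<lambda>x. \<Sum>l\<in>Fq v red.
      bracket v u red r (mmul (mmul (mmul g (beta u)) (M2 1 (teich v red l) 0 1)) wmat) x)"

definition Tm10 where "Tm10 v u red r = lin_ext v (Tm10_basis v u red r)"
definition T12 where "T12 v u red r = lin_ext v (T12_basis v u red r)"

text \<open>(Ker T_{-1,0}, Ker T_{1,2}) = Ker T_{-1,0} + Ker T_{1,2} inside ind.\<close>
definition kersum :: "('f::field \<Rightarrow> int) \<Rightarrow> 'f \<Rightarrow> ('f \<Rightarrow> 'k::field) \<Rightarrow> nat \<Rightarrow> ('f m2 \<Rightarrow> 'k) set" where
  "kersum v u red r = {(\<lambda>x. a x + b x) | a b.
      a \<in> ind_space v u red r \<and> Tm10 v u red r a = (\<lambda>_. 0) \<and>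
      b \<in> ind_space v u red r \<and> T12 v u red r b = (\<lambda>_. 0)}"

text \<open>Digit vectors (mu_0,...,mu_{n-1}) in F_q^n; they parametrise I_n bijectively.\<close>
definition digits :: "('f::field \<Rightarrow> int) \<Rightarrow> ('f \<Rightarrow> 'k) \<Rightarrow> nat \<Rightarrow> (nat \<Rightarrow> 'k) set" where
  "digits v red n = PiE {..<n} (\<lambda>_. Fq v red)"

definition tnum :: "('f::field \<Rightarrow> int) \<Rightarrow> 'f \<Rightarrow> ('f \<Rightarrow> 'k) \<Rightarrow> (nat \<Rightarrow> 'k) \<Rightarrow> nat \<Rightarrow> 'f" where
  "tnum v u red mu m = (\<Sum>i<m. teich v red (mu i) * u ^ i)"

definition s_vec :: "('f::field \<Rightarrow> int) \<Rightarrow> 'f \<Rightarrow> ('f \<Rightarrow> 'k::field) \<Rightarrow> nat \<Rightarrow> nat \<Rightarrow> nat \<Rightarrow> ('f m2 \<Rightarrow> 'k)" where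
  "s_vec v u red r n k = (\<lambda>x. \<Sum>mu\<in>digits v red n.
      mu (n - 1) ^ k * bracket v u red r (M2 (u ^ n) (tnum v u red mu n) 0 1) x)"

definition t_vec :: "('f::field \<Rightarrow> int) \<Rightarrow> 'f \<Rightarrow> ('f \<Rightarrow> 'k::field) \<Rightarrow> nat \<Rightarrow> nat \<Rightarrow> nat \<Rightarrow> ('f m2 \<Rightarrow> 'k)" where
  "t_vec v u red r n s = (\<lambda>x. \<Sum>mu\<in>digits v red n.
      mu (n - 1) ^ s * bracket v u red r
        (mmul (mmul (M2 (u ^ (n - 1)) (tnum v u red mu (n - 1)) 0 1)
                    (M2 1 (teich v red (mu (n - 1))) 0 1)) wmat) x)"

end

(* Every g in I factors as g = h t with h in I(1) and t = diag([a], [d]), the diagonal matrix of the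
   Teichmueller lifts of the reductions of the diagonal entries of g; the lifts exist because
   x ^ q ^ m converges in the complete field F.  The torus element t sends each summand [M mu, 1]
   of s_n^k (resp. t_n^s) to a chi_r-multiple of the summand whose digits mu are all multiplied by
   a/d, so t merely permutes the summands and s_n^k, t_n^s are genuine eigenvectors of t.  If lam is
   the eigenvalue, then g S - lam S = lam (h S - S), which lies in Ker T_{-1,0} + Ker T_{1,2} by
   the I(1)-invariance hypothesis. *)

theory Submission
  imports Defs
begin

lemma mmul_M2 [simp]:
  "mmul (M2 a b c d) (M2 a' b' c' d') = M2 (a*a' + b*c') (a*b' + b*d') (c*a' + d*c') (c*b' + d*d')"
  by (simp add: mmul_def)

lemma mmul_assoc: "mmul (mmul A B) C = mmul A (mmul B C)"
  by (cases A; cases B; cases C) (simp add: algebra_simps)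

lemma mdet_M2 [simp]: "mdet (M2 a b c d) = a*d - b*c"
  by (simp add: mdet_def)

lemma mdet_mmul: "mdet (mmul A B) = mdet A * mdet B"
  by (cases A; cases B) (simp add: algebra_simps)

definition diag :: "'a::zero \<Rightarrow> 'a \<Rightarrow> 'a m2" where
  "diag a d = M2 a 0 0 d"

lemma act_mmul: "act (mmul g h) f = act g (act h f)"
  by (simp add: act_def mmul_assoc)

lemma ind_space_mult: "f \<in> ind_space v u red r \<Longrightarrow> (\<lambda>x. c * f x) \<in> ind_space v u red r"
  unfolding ind_space_def by (auto simp: algebra_simps)

lemma lin_ext_mult: "lin_ext v B (\<lambda>x. c * f x) = (\<lambda>x. c * lin_ext v B f x)"
proof (cases "c = 0")
  case True
  then have "cosets_of v (\<lambda>x. c * f x) = {}"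
    by (simp add: cosets_of_def)
  with True show ?thesis
    by (simp add: lin_ext_def)
next
  case False
  then have "cosets_of v (\<lambda>x. c * f x) = cosets_of v f"
    by (simp add: cosets_of_def)
  then show ?thesis
    by (simp add: lin_ext_def sum_distrib_left mult.assoc)
qed

lemma kersum_mult:
  assumes "f \<in> kersum v u red r"
  shows "(\<lambda>x. c * f x) \<in> kersum v u red r"
proof -
  obtain a b where ab: "f = (\<lambda>x. a x + b x)"
    "a \<in> ind_space v u red r" "Tm10 v u red r a = (\<lambda>_. 0)"
    "b \<in> ind_space v u red r" "T12 v u red r b = (\<lambda>_. 0)"
    using assms by (auto simp: kersum_def)
  have "Tm10 v u red r (\<lambda>x. c * a x) = (\<lambda>_. 0)" "T12 v u red r (\<lambda>x. c * b x) = (\<lambda>_. 0)"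
    using ab by (simp_all add: Tm10_def T12_def lin_ext_mult)
  moreover have "(\<lambda>x. c * f x) = (\<lambda>x. c * a x + c * b x)"
    using ab by (simp add: algebra_simps)
  ultimately show ?thesis
    unfolding kersum_def
    by (intro CollectI exI[of _ "\<lambda>x. c * a x"] exI[of _ "\<lambda>x. c * b x"])
       (use ab ind_space_mult in auto)
qed

lemma eigenvector_mod_kersum_mmul:
  assumes "act t S = (\<lambda>x. lam * S x)" "(\<lambda>x. act h S x - S x) \<in> kersum v u red r"
  shows "(\<lambda>x. act (mmul h t) S x - lam * S x) \<in> kersum v u red r"
proof -
  have "act (mmul h t) S = (\<lambda>x. lam * act h S x)"
    unfolding act_mmul assms(1) by (simp add: act_def)
  then have "(\<lambda>x. act (mmul h t) S x - lam * S x) = (\<lambda>x. lam * (act h S x - S x))"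
    by (simp add: algebra_simps)
  then show ?thesis
    using kersum_mult[OF assms(2)] by simp
qed

lemma power_power_eq_self: "(t::'a::monoid_mult) ^ q = t \<Longrightarrow> t ^ (q ^ m) = t"
  by (induction m) (simp_all add: power_mult)

locale padic =
  fixes v :: "'f::field_char_0 \<Rightarrow> int" and u :: 'f and p :: nat and red :: "'f \<Rightarrow> 'k::field"
  assumes padic_setting: "padic_setting v u p red"
begin

abbreviation "\<O> \<equiv> Oset v"
abbreviation "Fqs \<equiv> Fq v red"
abbreviation "q \<equiv> card (Fq v red)"
abbreviation "tm \<equiv> teich v red"

lemma v_mult: "x \<noteq> 0 \<Longrightarrow> y \<noteq> 0 \<Longrightarrow> v (x * y) = v x + v y"
  using padic_setting unfolding padic_setting_def by blast

lemma v_add_ge_min: "x \<noteq> 0 \<Longrightarrow> y \<noteq> 0 \<Longrightarrow> x + y \<noteq> 0 \<Longrightarrow> min (v x) (v y) \<le> v (x + y)"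
  using padic_setting unfolding padic_setting_def by blast

lemma u_nonzero: "u \<noteq> 0" and v_u: "v u = 1"
  using padic_setting unfolding padic_setting_def by blast+

lemma complete:
  fixes a :: "nat \<Rightarrow> 'f"
  assumes "\<forall>N. \<exists>M. \<forall>m\<ge>M. \<forall>m'\<ge>M. vge v (a m - a m') N"
  shows "\<exists>L. \<forall>N. \<exists>M. \<forall>m\<ge>M. vge v (a m - L) N"
proof -
  have "\<forall>a :: nat \<Rightarrow> 'f. (\<forall>N. \<exists>M. \<forall>m\<ge>M. \<forall>m'\<ge>M. vge v (a m - a m') N) \<longrightarrow>
          (\<exists>L. \<forall>N. \<exists>M. \<forall>m\<ge>M. vge v (a m - L) N)"
    using padic_setting unfolding padic_setting_def by (elim conjE) assumption
  with assms show ?thesis by blast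
qed

lemma red_add: "x \<in> \<O> \<Longrightarrow> y \<in> \<O> \<Longrightarrow> red (x + y) = red x + red y"
  using padic_setting unfolding padic_setting_def by blast

lemma red_mult: "x \<in> \<O> \<Longrightarrow> y \<in> \<O> \<Longrightarrow> red (x * y) = red x * red y"
  using padic_setting unfolding padic_setting_def by blast

lemma red_one [simp]: "red 1 = 1"
  using padic_setting unfolding padic_setting_def by blast

lemma red_eq_0_iff: "x \<in> \<O> \<Longrightarrow> red x = 0 \<longleftrightarrow> vge v x 1"
  using padic_setting unfolding padic_setting_def by blast

lemma finite_Fq: "finite Fqs"
  using padic_setting unfolding padic_setting_def Fq_def by blast

lemma v_one [simp]: "v 1 = 0"
  using v_mult[of 1 1] by simp

lemma v_inverse: "x \<noteq> 0 \<Longrightarrow> v (inverse x) = - v x"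
  using v_mult[of x "inverse x"] by simp

lemma v_power: "x \<noteq> 0 \<Longrightarrow> v (x ^ n) = int n * v x"
  by (induction n) (auto simp: v_mult algebra_simps)

lemma v_power_int: "x \<noteq> 0 \<Longrightarrow> v (x powi m) = m * v x"
  by (auto simp: power_int_def v_inverse v_power)

lemma vge_0 [simp]: "vge v 0 N"
  by (simp add: vge_def)

lemma vge_minus [simp]: "vge v (- x) N \<longleftrightarrow> vge v x N"
proof -
  have "v (- x) = v x"
    using v_mult[of "-1" x] v_mult[of "-1" "-1"] by (cases "x = 0") simp_all
  then show ?thesis by (simp add: vge_def)
qed

lemma vge_mono: "vge v x N \<Longrightarrow> M \<le> N \<Longrightarrow> vge v x M"
  by (auto simp: vge_def)

lemma vge_add: "vge v x N \<Longrightarrow> vge v y N \<Longrightarrow> vge v (x + y) N"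
  using v_add_ge_min[of x y] by (cases "x = 0 \<or> y = 0 \<or> x + y = 0") (auto simp: vge_def)

lemma vge_diff: "vge v x N \<Longrightarrow> vge v y N \<Longrightarrow> vge v (x - y) N"
  using vge_add[of x N "- y"] by simp

lemma vge_diff_commute: "vge v (x - y) N \<longleftrightarrow> vge v (y - x) N"
  by (metis minus_diff_eq vge_minus)

lemma vge_mult: "vge v x N \<Longrightarrow> vge v y M \<Longrightarrow> vge v (x * y) (N + M)"
  using v_mult[of x y] by (cases "x = 0 \<or> y = 0") (auto simp: vge_def)

lemma vge_all_imp_zero:
  assumes "\<And>N. N \<ge> 1 \<Longrightarrow> vge v x N" shows "x = 0"
  using assms[of "max 1 (v x + 1)"] by (auto simp: vge_def)

lemma O_iff: "x \<in> \<O> \<longleftrightarrow> vge v x 0"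
  by (simp add: Oset_def)

lemma O_add: "x \<in> \<O> \<Longrightarrow> y \<in> \<O> \<Longrightarrow> x + y \<in> \<O>"
  and O_minus: "x \<in> \<O> \<Longrightarrow> - x \<in> \<O>"
  and O_diff: "x \<in> \<O> \<Longrightarrow> y \<in> \<O> \<Longrightarrow> x - y \<in> \<O>"
  and O_mult: "x \<in> \<O> \<Longrightarrow> y \<in> \<O> \<Longrightarrow> x * y \<in> \<O>"
  using vge_mult[of x 0 y 0] by (simp_all add: O_iff vge_add vge_diff)

lemma O_0 [simp]: "0 \<in> \<O>" and O_1 [simp]: "1 \<in> \<O>"
  by (simp_all add: O_iff vge_def)

lemma O_power: "x \<in> \<O> \<Longrightarrow> x ^ n \<in> \<O>"
  by (induction n) (auto intro: O_mult)

lemma O_sum: "(\<And>i. i \<in> A \<Longrightarrow> f i \<in> \<O>) \<Longrightarrow> sum f A \<in> \<O>"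
  by (induction A rule: infinite_finite_induct) (auto intro: O_add)

lemma O_inverse: "x \<noteq> 0 \<Longrightarrow> v x = 0 \<Longrightarrow> inverse x \<in> \<O>"
  by (simp add: O_iff vge_def v_inverse)

lemma red_0 [simp]: "red 0 = 0"
  using red_add[of 0 0] by (metis O_0 add_cancel_right_right)

lemma red_minus: "x \<in> \<O> \<Longrightarrow> red (- x) = - red x"
  using red_add[of x "- x"] O_minus[of x] by (simp add: minus_unique)

lemma red_diff: "x \<in> \<O> \<Longrightarrow> y \<in> \<O> \<Longrightarrow> red (x - y) = red x - red y"
  using red_add[of x "- y"] red_minus[of y] O_minus[of y] by simp

lemma red_power: "x \<in> \<O> \<Longrightarrow> red (x ^ n) = red x ^ n"
  by (induction n) (auto simp: red_mult O_power)

lemma red_sum: "(\<And>i. i \<in> A \<Longrightarrow> f i \<in> \<O>) \<Longrightarrow> red (sum f A) = (\<Sum>i\<in>A. red (f i))"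
  by (induction A rule: infinite_finite_induct) (auto simp: red_add O_sum)

lemma red_nonzero_iff: "x \<in> \<O> \<Longrightarrow> red x \<noteq> 0 \<longleftrightarrow> x \<noteq> 0 \<and> v x = 0"
  using red_eq_0_iff[of x] by (auto simp: O_iff vge_def)

lemma red_inverse: "x \<in> \<O> \<Longrightarrow> red x \<noteq> 0 \<Longrightarrow> red (inverse x) = inverse (red x)"
  using red_mult[of x "inverse x"] red_nonzero_iff[of x] O_inverse[of x]
  by (simp add: field_simps)

lemma red_eq_iff_vge: "x \<in> \<O> \<Longrightarrow> y \<in> \<O> \<Longrightarrow> red x = red y \<longleftrightarrow> vge v (x - y) 1"
  using red_eq_0_iff[of "x - y"] red_diff[of x y] O_diff[of x y] by auto

lemma Fq_red: "x \<in> \<O> \<Longrightarrow> red x \<in> Fqs"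
  by (simp add: Fq_def)

lemma FqE: "y \<in> Fqs \<Longrightarrow> (\<And>x. x \<in> \<O> \<Longrightarrow> y = red x \<Longrightarrow> P) \<Longrightarrow> P"
  by (auto simp: Fq_def)

lemma Fq_0 [simp]: "0 \<in> Fqs" and Fq_1 [simp]: "1 \<in> Fqs"
  using Fq_red[of 0] Fq_red[of 1] by simp_all

lemma Fq_add: "x \<in> Fqs \<Longrightarrow> y \<in> Fqs \<Longrightarrow> x + y \<in> Fqs"
  by (metis FqE Fq_red O_add red_add)

lemma Fq_mult: "x \<in> Fqs \<Longrightarrow> y \<in> Fqs \<Longrightarrow> x * y \<in> Fqs"
  by (metis FqE Fq_red O_mult red_mult)

lemma Fq_diff: "x \<in> Fqs \<Longrightarrow> y \<in> Fqs \<Longrightarrow> x - y \<in> Fqs"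
  by (metis FqE Fq_red O_diff red_diff)

lemma Fq_inverse: "x \<in> Fqs \<Longrightarrow> inverse x \<in> Fqs"
proof (cases "x = 0")
  case False
  assume "x \<in> Fqs"
  then obtain t where "t \<in> \<O>" "x = red t" by (rule FqE)
  with False have "inverse x = red (inverse t)" and "inverse t \<in> \<O>"
    using red_inverse[of t] red_nonzero_iff[of t] O_inverse[of t] by auto
  then show ?thesis by (simp add: Fq_red)
qed simp

lemma card_Fq_pos: "q > 0"
  using finite_Fq Fq_0 card_gt_0_iff by blast

lemma of_nat_card_Fq: "of_nat q = (0::'k)"
proof -
  have "(\<Sum>x\<in>Fqs. x + 1) = (\<Sum>x\<in>Fqs. x)"
    by (rule sum.reindex_bij_witness[of _ "\<lambda>x. x - 1" "\<lambda>x. x + 1"]) (auto intro: Fq_add Fq_diff)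
  then show ?thesis by (simp add: sum.distrib)
qed

lemma Fq_power_card: "y \<in> Fqs \<Longrightarrow> y ^ q = y"
proof (cases "y = 0")
  case False
  assume y: "y \<in> Fqs"
  let ?U = "Fqs - {0}"
  have "(\<Prod>x\<in>?U. y * x) = (\<Prod>x\<in>?U. x)"
    by (rule prod.reindex_bij_witness[of _ "\<lambda>x. inverse y * x" "\<lambda>x. y * x"])
       (use False y in \<open>auto intro: Fq_mult Fq_inverse\<close>)
  moreover have "(\<Prod>x\<in>?U. y * x) = y ^ (q - 1) * (\<Prod>x\<in>?U. x)"
    using finite_Fq by (simp add: prod.distrib card_Diff_singleton)
  moreover have "(\<Prod>x\<in>?U. x) \<noteq> 0"
    using finite_Fq by simp
  ultimately have "y ^ Suc (q - 1) = y"
    by simp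
  then show ?thesis
    using card_Fq_pos by simp
qed (use card_Fq_pos in simp)

section \<open>Teichmueller representatives\<close>

lemma vge_diff_power_card:
  assumes "a \<in> \<O>" "b \<in> \<O>" "vge v (a - b) j" "j \<ge> 1"
  shows "vge v (a ^ q - b ^ q) (j + 1)"
proof -
  let ?S = "\<Sum>i<q. b ^ (q - Suc i) * a ^ i"
  have S_O: "?S \<in> \<O>"
    using assms by (auto intro!: O_sum O_mult O_power)
  have "red a = red b"
    using assms red_eq_iff_vge vge_mono by blast
  have "red ?S = (\<Sum>i<q. red b ^ (q - Suc i) * red a ^ i)"
    using assms by (simp add: red_sum O_mult O_power red_mult red_power)
  also have "\<dots> = (\<Sum>i<q. red b ^ (q - 1))"
    by (rule sum.cong) (auto simp: \<open>red a = red b\<close> simp flip: power_add)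
  also have "\<dots> = 0"
    using of_nat_card_Fq by simp
  finally have "vge v ?S 1"
    using red_eq_0_iff S_O by blast
  moreover have "a ^ q - b ^ q = (a - b) * ?S"
    by (rule power_diff_sumr2)
  ultimately show ?thesis
    using vge_mult[OF assms(3)] by simp
qed

lemma vge_diff_power_card_iter:
  assumes "a \<in> \<O>" "b \<in> \<O>" "vge v (a - b) 1"
  shows "vge v (a ^ (q ^ m) - b ^ (q ^ m)) (int m + 1)"
proof (induction m)
  case (Suc m)
  have "vge v ((a ^ (q ^ m)) ^ q - (b ^ (q ^ m)) ^ q) (int m + 1 + 1)"
    by (rule vge_diff_power_card) (use assms Suc in \<open>auto intro: O_power\<close>)
  then show ?case
    by (simp add: power_mult[symmetric] mult.commute add.commute)
qed (use assms in simp)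

lemma limit_if_successive_close:
  fixes a :: "nat \<Rightarrow> 'f"
  assumes successive: "\<And>m. vge v (a (Suc m) - a m) (int m + 1)"
  obtains L where "\<And>N. \<exists>M. \<forall>m\<ge>M. vge v (a m - L) N"
proof -
  have close: "vge v (a m' - a m) (int m + 1)" if "m \<le> m'" for m m'
    using that
  proof (induction m' rule: dec_induct)
    case (step k)
    have "vge v (a (Suc k) - a k) (int m + 1)"
      using successive[of k] vge_mono step.hyps by fastforce
    then show ?case
      using vge_add[OF _ step.IH] by fastforce
  qed simp
  have "\<exists>M. \<forall>m\<ge>M. \<forall>m'\<ge>M. vge v (a m - a m') N" for N
  proof (intro exI allI impI)
    fix m m' assume "nat N \<le> m" "nat N \<le> m'"
    show "vge v (a m - a m') N"
    proof (cases "m \<le> m'")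
      case True
      then have "vge v (a m - a m') (int m + 1)"
        using close vge_diff_commute by blast
      then show ?thesis
        by (rule vge_mono) (use \<open>nat N \<le> m\<close> in linarith)
    next
      case False
      then have "vge v (a m - a m') (int m' + 1)"
        using close by simp
      then show ?thesis
        by (rule vge_mono) (use \<open>nat N \<le> m'\<close> in linarith)
    qed
  qed
  then show ?thesis
    using complete that by blast
qed

lemma teich_unique:
  assumes "t \<in> \<O>" "t' \<in> \<O>" "red t = red t'" "t ^ q = t" "t' ^ q = t'"
  shows "t = t'"
proof (rule vge_all_imp_zero[of "t - t'", simplified])
  fix N :: int assume "N \<ge> 1"
  have "vge v (t ^ (q ^ nat (N - 1)) - t' ^ (q ^ nat (N - 1))) (int (nat (N - 1)) + 1)"
    using assms red_eq_iff_vge by (intro vge_diff_power_card_iter) auto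
  then show "vge v (t - t') N"
    using power_power_eq_self[of t] power_power_eq_self[of t'] assms \<open>N \<ge> 1\<close> by simp
qed

lemma limit_O_red:
  fixes a :: "nat \<Rightarrow> 'f"
  assumes "\<And>m. a m \<in> \<O>" "\<And>m. red (a m) = x" "\<And>N. \<exists>M. \<forall>m\<ge>M. vge v (a m - L) N"
  shows "L \<in> \<O>" "red L = x"
proof -
  obtain M0 where "vge v (a M0 - L) 0"
    using assms(3)[of 0] by blast
  then show L_O: "L \<in> \<O>"
    using O_diff[OF assms(1)[of M0], of "a M0 - L"] by (simp add: O_iff)
  obtain M1 where "vge v (a M1 - L) 1"
    using assms(3)[of 1] by blast
  then show "red L = x"
    using red_eq_iff_vge[OF assms(1)[of M1] L_O] assms(2) by simp
qed

lemma limit_power_card_eq_self: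
  assumes "\<And>m. a m \<in> \<O>" "\<And>m. a (Suc m) = a m ^ q" "L \<in> \<O>"
    and lim: "\<And>N. \<exists>M. \<forall>m\<ge>M. vge v (a m - L) N"
  shows "L ^ q = L"
proof (rule vge_all_imp_zero[of "L ^ q - L", simplified])
  fix N :: int assume "N \<ge> 1"
  obtain M where M: "\<forall>m\<ge>M. vge v (a m - L) N"
    using lim by blast
  then have "vge v (L ^ q - a M ^ q) (N + 1)"
    using vge_diff_power_card[OF assms(3,1)] vge_diff_commute \<open>N \<ge> 1\<close> by blast
  then have "vge v (L ^ q - a M ^ q) N"
    by (rule vge_mono) simp
  moreover have "vge v (a (Suc M) - L) N"
    using M by simp
  ultimately have "vge v ((L ^ q - a M ^ q) + (a (Suc M) - L)) N"
    by (rule vge_add)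
  then show "vge v (L ^ q - L) N"
    by (simp add: assms(2))
qed

text \<open>The Teichmueller lift of \<open>red x0\<close> is the limit of \<open>x0 ^ q ^ m\<close>.\<close>
lemma teich_exists:
  assumes "x \<in> Fqs"
  shows "\<exists>t. t \<in> \<O> \<and> red t = x \<and> t ^ q = t"
proof -
  obtain x0 where x0: "x0 \<in> \<O>" "x = red x0"
    using assms by (rule FqE)
  define a where "a m = x0 ^ (q ^ m)" for m
  have a_O: "a m \<in> \<O>" for m
    using x0 by (simp add: a_def O_power)
  have red_a: "red (a m) = x" for m
    using x0 Fq_power_card[OF assms] power_power_eq_self[of x] by (simp add: a_def red_power)
  have a_Suc: "a (Suc m) = a m ^ q" for m
    by (simp add: a_def mult.commute flip: power_mult)
  have "vge v (x0 ^ q - x0) 1"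
    using x0 Fq_power_card[OF assms] red_eq_iff_vge[of "x0 ^ q" x0] by (simp add: O_power red_power)
  then have "vge v ((x0 ^ q) ^ (q ^ m) - x0 ^ (q ^ m)) (int m + 1)" for m
    using x0 by (intro vge_diff_power_card_iter) (auto intro: O_power)
  then have "vge v (a (Suc m) - a m) (int m + 1)" for m
    by (simp add: a_def mult.commute flip: power_mult)
  then obtain L where L: "\<And>N. \<exists>M. \<forall>m\<ge>M. vge v (a m - L) N"
    using limit_if_successive_close by blast
  have "L \<in> \<O>" "red L = x"
    using limit_O_red[OF a_O red_a L] by blast+
  moreover have "L ^ q = L"
    using limit_power_card_eq_self[OF a_O a_Suc \<open>L \<in> \<O>\<close> L] .
  ultimately show ?thesis
    by blast
qed

lemma teich:
  assumes "x \<in> Fqs"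
  shows teich_O: "tm x \<in> \<O>" and red_teich: "red (tm x) = x" and teich_power_card: "tm x ^ q = tm x"
proof -
  have "\<exists>!t. t \<in> \<O> \<and> red t = x \<and> t ^ q = t"
    using teich_exists[OF assms] teich_unique by blast
  then have "tm x \<in> \<O> \<and> red (tm x) = x \<and> tm x ^ q = tm x"
    unfolding teich_def by (rule theI')
  then show "tm x \<in> \<O>" "red (tm x) = x" "tm x ^ q = tm x"
    by auto
qed

lemma teich_mult:
  assumes "x \<in> Fqs" "y \<in> Fqs"
  shows "tm (x * y) = tm x * tm y"
  by (rule teich_unique)
     (use teich[OF Fq_mult[OF assms]] teich[OF assms(1)] teich[OF assms(2)] in
       \<open>auto simp: O_mult red_mult power_mult_distrib\<close>)

section \<open>The Iwahori decomposition\<close>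

definition unit_O :: "'f \<Rightarrow> bool" where
  "unit_O x \<longleftrightarrow> x \<noteq> 0 \<and> v x = 0"

lemma unit_O_teich: "x \<in> Fqs \<Longrightarrow> x \<noteq> 0 \<Longrightarrow> unit_O (tm x)"
  using red_nonzero_iff[OF teich_O] red_teich by (auto simp: unit_O_def)

lemma unit_O_mult: "unit_O x \<Longrightarrow> unit_O y \<Longrightarrow> unit_O (x * y)"
  by (simp add: unit_O_def v_mult)

lemma unit_O_inverse: "unit_O x \<Longrightarrow> unit_O (inverse x)"
  by (simp add: unit_O_def v_inverse)

lemma unit_O_imp_O: "unit_O x \<Longrightarrow> x \<in> \<O>"
  by (simp add: unit_O_def O_iff vge_def)

lemma Iw_mmul_diag:
  assumes "h \<in> Iw v" "unit_O \<alpha>" "unit_O \<delta>"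
  shows "mmul h (diag \<alpha> \<delta>) \<in> Iw v"
proof (cases h)
  case (M2 a b c d)
  have "vge v (c * \<alpha>) (1 + 0)"
    using assms M2 unit_O_imp_O by (intro vge_mult) (auto simp: Iw_def O_iff)
  moreover have "a * \<alpha> * (d * \<delta>) - b * \<delta> * (c * \<alpha>) = mdet h * (\<alpha> * \<delta>)"
    using M2 by (simp add: algebra_simps)
  ultimately show ?thesis
    using assms M2 unit_O_mult[OF assms(2,3)] unit_O_imp_O
    by (auto simp: Iw_def diag_def O_mult unit_O_def v_mult)
qed

lemma Iw_red_diag_nonzero:
  assumes "g \<in> Iw v"
  shows "red (m11 g) \<noteq> 0" "red (m22 g) \<noteq> 0"
proof -
  obtain a b c d where g: "g = M2 a b c d"
    by (cases g)
  have entries: "a \<in> \<O>" "b \<in> \<O>" "d \<in> \<O>" "vge v c 1" "a * d - b * c \<noteq> 0" "v (a * d - b * c) = 0"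
    using assms g by (auto simp: Iw_def)
  have "\<not> vge v (a * d) 1"
  proof
    assume "vge v (a * d) 1"
    moreover have "vge v (b * c) 1"
      using vge_mult[of b 0 c 1] entries by (simp add: O_iff)
    ultimately have "vge v (a * d - b * c) 1"
      by (rule vge_diff)
    with entries show False
      by (simp add: vge_def)
  qed
  then show "red (m11 g) \<noteq> 0" "red (m22 g) \<noteq> 0"
    using g entries red_eq_0_iff vge_mult[of a 1 d 0] vge_mult[of a 0 d 1] by (auto simp: O_iff)
qed

lemma Iw_eq_I1_mmul_teich_diag:
  assumes "g \<in> Iw v"
  shows "\<exists>h\<in>I1 v red. g = mmul h (diag (tm (red (m11 g))) (tm (red (m22 g))))"
proof -
  obtain a b c d where g: "g = M2 a b c d"
    by (cases g)
  have a_d: "a \<in> \<O>" "d \<in> \<O>" "red a \<noteq> 0" "red d \<noteq> 0"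
    using assms Iw_red_diag_nonzero[OF assms] g by (auto simp: Iw_def)
  define \<alpha> \<delta> where "\<alpha> = tm (red a)" and "\<delta> = tm (red d)"
  have units: "unit_O \<alpha>" "unit_O \<delta>"
    using unit_O_teich Fq_red a_d by (auto simp: \<alpha>_def \<delta>_def)
  define h where "h = mmul g (diag (inverse \<alpha>) (inverse \<delta>))"
  have "h \<in> Iw v"
    using Iw_mmul_diag[OF assms] units unit_O_inverse by (simp add: h_def)
  moreover have "red (a * inverse \<alpha>) = 1" "red (d * inverse \<delta>) = 1"
    using a_d units red_teich[OF Fq_red] unit_O_imp_O
    by (auto simp: \<alpha>_def \<delta>_def red_mult unit_O_def O_inverse red_inverse)
  ultimately have "h \<in> I1 v red"
    by (simp add: I1_def h_def g diag_def)
  moreover have "g = mmul h (diag (tm (red (m11 g))) (tm (red (m22 g))))"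
    using units by (simp add: h_def g diag_def mmul_assoc unit_O_def \<alpha>_def \<delta>_def)
  ultimately show ?thesis
    by blast
qed

section \<open>Action of diagonal matrices on digit sums\<close>

lemma IZ_mmul_diag_iff:
  assumes "unit_O \<alpha>" "unit_O \<delta>"
  shows "mmul y (diag \<alpha> \<delta>) \<in> IZ v \<longleftrightarrow> y \<in> IZ v"
proof -
  have IZ_mmul_diag: "mmul y (diag \<alpha> \<delta>) \<in> IZ v"
    if "y \<in> IZ v" "unit_O \<alpha>" "unit_O \<delta>" for y \<alpha> \<delta>
  proof -
    obtain z h where "y = mmul (diag z z) h" "z \<noteq> 0" "h \<in> Iw v"
      using \<open>y \<in> IZ v\<close> by (auto simp: IZ_def diag_def)
    then show ?thesis
      using Iw_mmul_diag[OF _ that(2,3)] by (auto simp: IZ_def diag_def mmul_assoc)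
  qed
  have "mmul (mmul y (diag \<alpha> \<delta>)) (diag (inverse \<alpha>) (inverse \<delta>)) = y"
    using assms by (cases y) (simp add: diag_def mmul_assoc unit_O_def)
  then show ?thesis
    using IZ_mmul_diag[of "mmul y (diag \<alpha> \<delta>)" "inverse \<alpha>" "inverse \<delta>"] IZ_mmul_diag[of y \<alpha> \<delta>]
      unit_O_inverse assms by metis
qed

lemma IZ_mdet_nonzero: "y \<in> IZ v \<Longrightarrow> mdet y \<noteq> 0"
  and IZ_scaled_m22_O: "y \<in> IZ v \<Longrightarrow> m22 y * u powi (- (v (mdet y) div 2)) \<in> \<O>"
proof -
  assume "y \<in> IZ v"
  then obtain z h where zh: "y = mmul (M2 z 0 0 z) h" "z \<noteq> 0" "h \<in> Iw v"
    by (auto simp: IZ_def)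
  obtain a b c d where h: "h = M2 a b c d"
    by (cases h)
  have det_h: "a * d - b * c \<noteq> 0" "v (a * d - b * c) = 0" and "d \<in> \<O>"
    using zh h by (auto simp: Iw_def)
  have mdet_y: "mdet y = (z * z) * (a * d - b * c)"
    using zh h by (simp add: algebra_simps)
  then show "mdet y \<noteq> 0"
    using det_h zh by simp
  have "v (mdet y) div 2 = v z"
    using mdet_y det_h zh by (simp add: v_mult)
  moreover have "z * d * u powi (- v z) \<in> \<O>"
    using \<open>d \<in> \<O>\<close> zh u_nonzero
    by (cases "d = 0") (auto simp: O_iff vge_def v_mult v_power_int v_u power_int_eq_0_iff)
  ultimately show "m22 y * u powi (- (v (mdet y) div 2)) \<in> \<O>"
    using zh h by simp
qed

lemma chi_mmul_diag:
  assumes "y \<in> IZ v" "unit_O \<alpha>" "unit_O \<delta>"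
  shows "chi v u red r (mmul y (diag \<alpha> \<delta>)) = red \<delta> ^ r * chi v u red r y"
proof -
  have "v (mdet (mmul y (diag \<alpha> \<delta>))) = v (mdet y)"
    using IZ_mdet_nonzero[OF assms(1)] unit_O_mult[OF assms(2,3)]
    by (simp add: mdet_mmul diag_def v_mult unit_O_def)
  moreover have "m22 (mmul y (diag \<alpha> \<delta>)) = \<delta> * m22 y"
    by (cases y) (simp add: diag_def)
  ultimately show ?thesis
    using IZ_scaled_m22_O[OF assms(1)] unit_O_imp_O[OF assms(3)]
    by (simp add: chi_def mult.assoc red_mult power_mult_distrib)
qed

text \<open>\<open>t [M, 1] = [M' diag \<alpha> \<delta>, 1] = \<chi>\<^sub>r(diag \<alpha> \<delta>) [M', 1]\<close>.\<close>
lemma act_bracket_diag: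
  assumes "mmul t M = mmul M' (diag \<alpha> \<delta>)" "mdet t \<noteq> 0" "unit_O \<alpha>" "unit_O \<delta>"
  shows "act t (bracket v u red r M) = (\<lambda>x. red \<delta> ^ r * bracket v u red r M' x)"
proof
  fix x
  have xtM: "mmul (mmul x t) M = mmul (mmul x M') (diag \<alpha> \<delta>)"
    by (simp add: mmul_assoc assms(1))
  have det_xt: "mdet (mmul x t) \<noteq> 0 \<longleftrightarrow> mdet x \<noteq> 0"
    using assms(2) by (simp add: mdet_mmul)
  show "act t (bracket v u red r M) x = red \<delta> ^ r * bracket v u red r M' x"
    unfolding act_def bracket_def xtM det_xt IZ_mmul_diag_iff[OF assms(3,4)]
    using chi_mmul_diag[OF _ assms(3,4)] by simp
qed

definition scale_digits :: "'k \<Rightarrow> nat \<Rightarrow> (nat \<Rightarrow> 'k) \<Rightarrow> nat \<Rightarrow> 'k" where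
  "scale_digits c n mu = restrict (\<lambda>i. c * mu i) {..<n}"

lemma scale_digits_mem: "c \<in> Fqs \<Longrightarrow> mu \<in> digits v red n \<Longrightarrow> scale_digits c n mu \<in> digits v red n"
  unfolding digits_def scale_digits_def restrict_PiE_iff by (auto simp: PiE_iff intro: Fq_mult)

lemma scale_digits_inverse:
  "c \<noteq> 0 \<Longrightarrow> mu \<in> digits v red n \<Longrightarrow> scale_digits (inverse c) n (scale_digits c n mu) = mu"
  by (auto simp: digits_def scale_digits_def PiE_iff extensional_def fun_eq_iff)

lemma sum_digits_scale:
  assumes "c \<in> Fqs" "c \<noteq> 0" "n \<ge> 1"
  shows "(\<Sum>mu\<in>digits v red n. mu (n - 1) ^ k * F (scale_digits c n mu))
       = inverse c ^ k * (\<Sum>nu\<in>digits v red n. nu (n - 1) ^ k * F nu)"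
  unfolding sum_distrib_left
proof (rule sum.reindex_bij_witness[of _ "scale_digits (inverse c) n" "scale_digits c n"])
  fix mu assume "mu \<in> digits v red n"
  then show "scale_digits (inverse c) n (scale_digits c n mu) = mu" "scale_digits c n mu \<in> digits v red n"
    using assms scale_digits_inverse scale_digits_mem by auto
  show "inverse c ^ k * (scale_digits c n mu (n - 1) ^ k * F (scale_digits c n mu))
      = mu (n - 1) ^ k * F (scale_digits c n mu)"
    using assms by (simp add: scale_digits_def power_mult_distrib field_simps)
next
  fix nu assume "nu \<in> digits v red n"
  then show "scale_digits c n (scale_digits (inverse c) n nu) = nu"
    "scale_digits (inverse c) n nu \<in> digits v red n"
    using assms scale_digits_inverse[of "inverse c"] scale_digits_mem Fq_inverse by auto
qed

lemma tnum_scale_digits: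
  assumes "c \<in> Fqs" "mu \<in> digits v red n" "m \<le> n"
  shows "tnum v u red (scale_digits c n mu) m = tm c * tnum v u red mu m"
  unfolding tnum_def sum_distrib_left
proof (rule sum.cong)
  fix i assume "i \<in> {..<m}"
  with assms have "i < n" "mu i \<in> Fqs"
    by (auto simp: digits_def PiE_iff)
  then show "tm (scale_digits c n mu i) * u ^ i = tm c * (tm (mu i) * u ^ i)"
    using teich_mult[OF assms(1)] by (simp add: scale_digits_def)
qed simp

text \<open>Both \<open>s_vec\<close> and \<open>t_vec\<close> are digit sums; a diagonal matrix acts on them by rescaling
  all digits.\<close>
definition digit_sum :: "nat \<Rightarrow> nat \<Rightarrow> nat \<Rightarrow> ((nat \<Rightarrow> 'k) \<Rightarrow> 'f m2) \<Rightarrow> 'f m2 \<Rightarrow> 'k" where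
  "digit_sum r n k M = (\<lambda>x. \<Sum>mu\<in>digits v red n. mu (n - 1) ^ k * bracket v u red r (M mu) x)"

lemma act_diag_digit_sum:
  assumes "c \<in> Fqs" "c \<noteq> 0" "n \<ge> 1" "unit_O \<alpha>" "unit_O \<delta>" "unit_O \<beta>" "unit_O \<epsilon>"
    and M: "\<And>mu. mu \<in> digits v red n \<Longrightarrow>
      mmul (diag \<alpha> \<delta>) (M mu) = mmul (M (scale_digits c n mu)) (diag \<beta> \<epsilon>)"
  shows "act (diag \<alpha> \<delta>) (digit_sum r n k M) = (\<lambda>x. red \<epsilon> ^ r * inverse c ^ k * digit_sum r n k M x)"
proof
  fix x
  have "mdet (diag \<alpha> \<delta>) \<noteq> 0"
    using assms by (simp add: diag_def unit_O_def)
  then have "act (diag \<alpha> \<delta>) (digit_sum r n k M) x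
      = (\<Sum>mu\<in>digits v red n. mu (n - 1) ^ k * (red \<epsilon> ^ r * bracket v u red r (M (scale_digits c n mu)) x))"
    unfolding digit_sum_def act_def
    using act_bracket_diag[OF M _ assms(6,7)] by (auto simp: act_def fun_eq_iff intro!: sum.cong)
  also have "\<dots> = red \<epsilon> ^ r * (\<Sum>mu\<in>digits v red n. mu (n - 1) ^ k *
      (\<lambda>nu. bracket v u red r (M nu) x) (scale_digits c n mu))"
    by (simp add: sum_distrib_left mult.left_commute)
  also have "\<dots> = red \<epsilon> ^ r * inverse c ^ k * digit_sum r n k M x"
    using sum_digits_scale[OF assms(1-3), of k "\<lambda>nu. bracket v u red r (M nu) x"]
    by (simp add: digit_sum_def mult.assoc)
  finally show "act (diag \<alpha> \<delta>) (digit_sum r n k M) x = red \<epsilon> ^ r * inverse c ^ k * digit_sum r n k M x" .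
qed

lemma teich_eq_teich_div_mult:
  assumes "A \<in> Fqs" "D \<in> Fqs" "D \<noteq> 0"
  shows "tm A = tm (A * inverse D) * tm D"
  using teich_mult[OF Fq_mult[OF assms(1) Fq_inverse[OF assms(2)]] assms(2)] assms(3)
  by (simp add: mult.assoc)

lemma act_teich_diag_s_vec:
  assumes "A \<in> Fqs" "D \<in> Fqs" "A \<noteq> 0" "D \<noteq> 0" "n \<ge> 1"
  shows "act (diag (tm A) (tm D)) (s_vec v u red r n k)
    = (\<lambda>x. D ^ r * (D * inverse A) ^ k * s_vec v u red r n k x)"
proof -
  let ?M = "\<lambda>mu. M2 (u ^ n) (tnum v u red mu n) 0 1"
  let ?c = "A * inverse D"
  have c: "?c \<in> Fqs" "?c \<noteq> 0"
    using assms by (auto intro: Fq_mult Fq_inverse)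
  have units: "unit_O (tm A)" "unit_O (tm D)"
    using assms unit_O_teich by auto
  have "act (diag (tm A) (tm D)) (digit_sum r n k ?M)
    = (\<lambda>x. red (tm D) ^ r * inverse ?c ^ k * digit_sum r n k ?M x)"
  proof (rule act_diag_digit_sum[OF c assms(5) units units])
    show "mmul (diag (tm A) (tm D)) (?M mu) = mmul (?M (scale_digits ?c n mu)) (diag (tm A) (tm D))"
      if "mu \<in> digits v red n" for mu
      using teich_eq_teich_div_mult[OF assms(1,2,4)]
      by (simp add: diag_def tnum_scale_digits[OF c(1) that] ac_simps)
  qed
  moreover have "s_vec v u red r n k = digit_sum r n k ?M"
    by (simp add: s_vec_def digit_sum_def)
  ultimately show ?thesis
    using assms red_teich by (simp add: mult.commute)
qed

lemma act_teich_diag_t_vec: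
  assumes "A \<in> Fqs" "D \<in> Fqs" "A \<noteq> 0" "D \<noteq> 0" "n \<ge> 1"
  shows "act (diag (tm A) (tm D)) (t_vec v u red r n s)
    = (\<lambda>x. A ^ r * (D * inverse A) ^ s * t_vec v u red r n s x)"
proof -
  let ?M = "\<lambda>mu. mmul (mmul (M2 (u ^ (n - 1)) (tnum v u red mu (n - 1)) 0 1)
                             (M2 1 (tm (mu (n - 1))) 0 1)) wmat"
  let ?c = "A * inverse D"
  have c: "?c \<in> Fqs" "?c \<noteq> 0"
    using assms by (auto intro: Fq_mult Fq_inverse)
  have units: "unit_O (tm A)" "unit_O (tm D)"
    using assms unit_O_teich by auto
  have "act (diag (tm A) (tm D)) (digit_sum r n s ?M)
    = (\<lambda>x. red (tm A) ^ r * inverse ?c ^ s * digit_sum r n s ?M x)"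
  proof (rule act_diag_digit_sum[OF c assms(5) units units(2,1)])
    show "mmul (diag (tm A) (tm D)) (?M mu) = mmul (?M (scale_digits ?c n mu)) (diag (tm D) (tm A))"
      if mu: "mu \<in> digits v red n" for mu
    proof -
      have "mu (n - 1) \<in> Fqs" "n - 1 < n"
        using mu assms(5) by (auto simp: digits_def PiE_iff)
      then have "tm (scale_digits ?c n mu (n - 1)) = tm ?c * tm (mu (n - 1))"
        using teich_mult[OF c(1)] by (simp add: scale_digits_def)
      then show ?thesis
        using teich_eq_teich_div_mult[OF assms(1,2,4)]
        by (simp add: diag_def wmat_def tnum_scale_digits[OF c(1) mu] algebra_simps)
    qed
  qed
  moreover have "t_vec v u red r n s = digit_sum r n s ?M"
    by (simp add: t_vec_def digit_sum_def)
  ultimately show ?thesis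
    using assms red_teich by (simp add: mult.commute)
qed

end

theorem lemma4p3:
  fixes v :: "'f::field_char_0 \<Rightarrow> int" and u :: 'f and p :: nat
    and red :: "'f \<Rightarrow> 'k::field" and r n k s :: nat and g :: "'f m2"
  assumes "padic_setting v u p red"
    and "0 < r" and "r < card (Fq v red) - 1"
    and "1 \<le> n"
    and "k \<le> card (Fq v red) - 1" and "s \<le> card (Fq v red) - 1"
    and "g \<in> Iw v"
  shows
    "((\<forall>h\<in>I1 v red. (\<lambda>x. act h (s_vec v u red r n k) x - s_vec v u red r n k x) \<in> kersum v u red r)
        \<longrightarrow> (\<lambda>x. act g (s_vec v u red r n k) x
                 - red (m22 g) ^ r * (red (m22 g) * inverse (red (m11 g))) ^ k * s_vec v u red r n k x)
              \<in> kersum v u red r)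
     \<and>
     ((\<forall>h\<in>I1 v red. (\<lambda>x. act h (t_vec v u red r n s) x - t_vec v u red r n s x) \<in> kersum v u red r)
        \<longrightarrow> (\<lambda>x. act g (t_vec v u red r n s) x
                 - red (m11 g) ^ r * (red (m22 g) * inverse (red (m11 g))) ^ s * t_vec v u red r n s x)
              \<in> kersum v u red r)"
proof -
  interpret padic v u p red
    by unfold_locales (rule assms(1))
  let ?A = "red (m11 g)" and ?D = "red (m22 g)"
  obtain h where h: "h \<in> I1 v red" and g: "g = mmul h (diag (teich v red ?A) (teich v red ?D))"
    using Iw_eq_I1_mmul_teich_diag[OF assms(7)] by blast
  have A_D: "?A \<in> Fq v red" "?D \<in> Fq v red" "?A \<noteq> 0" "?D \<noteq> 0"
    using assms(7) Iw_red_diag_nonzero by (auto simp: Iw_def Fq_red)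
  show ?thesis
    using h eigenvector_mod_kersum_mmul[OF act_teich_diag_s_vec[OF A_D assms(4)], of h, folded g]
      eigenvector_mod_kersum_mmul[OF act_teich_diag_t_vec[OF A_D assms(4)], of h, folded g]
    by blast
qed

end
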